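(* There is an absolute constant $c>0$ such that for every $n,m\ge1$ and every sequence $S\in[n]^m$, each of the four quantities $\mathit{WB}(S)$, $\mathit{SO}(S)$, $\mathit{WSF}(S)$, $\mathit{FF}(S)$ is at most $c$ times any other one of them plus $c\,m$.
   Context: Let $S=(s_1,\dots,s_m)\in[n]^m$. Logarithms are base 2. A weight function is $w:[n]\to\mathbb R_{>0}$. Write $W=\sum_{i=1}^n w(i)$ and $w[a:b]=\sum_{i=\min(a,b)}^{\max(a,b)} w(i)$. For a BST $T$ on $[n]$, $d_T(i)$ is the depth of $i$ (distance from the root, with the root at depth $0$), and $d_T(a,b)$ is the number of edges on the path between $a$ and $b$. The four bounds are: - Weighted balance: $\mathit{WB}(S)=\inf_w\sum_{j=1}^m\log\frac{W}{w(s_j)}$. - Static optimality: $\mathit{SO}(S)=\min_T\sum_{j=1}^m d_T(s_j)$. - Weighted static finger: $\mathit{WSF}(S)=\inf_{w,f}\sum_{j=1}^m\log\frac{w[f:s_j]}{\min\{w(f),w(s_j)\}}$, with $f$ ranging over $[n]$. - Fixed finger: $\mathit{FF}(S)=\min_{T,f}\sum_{j=1}^m d_T(f,s_j)$. Minima are taken over BSTs $T$ on $[n]$ and keys $f\in[n]$. *)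

theory Defs
  imports Complex_Main "HOL-Library.Tree"
begin

definition bst_on :: "nat \<Rightarrow> nat tree \<Rightarrow> bool" where
  "bst_on n T \<longleftrightarrow> inorder T = [1..<n+1]"

fun tdepth :: "nat tree \<Rightarrow> nat \<Rightarrow> nat" where
  "tdepth Leaf x = 0"
| "tdepth (Node l a r) x =
     (if x = a then 0 else if x < a then Suc (tdepth l x) else Suc (tdepth r x))"

text \<open>Number of edges on the path between keys a and b in a BST:
  descend while both keys lie strictly on the same side of the current root;
  the node where they separate is their lowest common ancestor.\<close>
fun tdist :: "nat tree \<Rightarrow> nat \<Rightarrow> nat \<Rightarrow> nat" where
  "tdist Leaf a b = 0"
| "tdist (Node l x r) a b =
     (if a < x \<and> b < x then tdist l a b
      else if x < a \<and> x < b then tdist r a b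
      else tdepth (Node l x r) a + tdepth (Node l x r) b)"

definition pos_weights :: "nat \<Rightarrow> (nat \<Rightarrow> real) set" where
  "pos_weights n = {w. \<forall>i\<in>{1..n}. w i > 0}"

definition totW :: "nat \<Rightarrow> (nat \<Rightarrow> real) \<Rightarrow> real" where
  "totW n w = (\<Sum>i=1..n. w i)"

definition wint :: "(nat \<Rightarrow> real) \<Rightarrow> nat \<Rightarrow> nat \<Rightarrow> real" where
  "wint w a b = (\<Sum>i=min a b..max a b. w i)"

definition WB :: "nat \<Rightarrow> nat list \<Rightarrow> real" where
  "WB n S = Inf ((\<lambda>w. \<Sum>x\<leftarrow>S. log 2 (totW n w / w x)) ` pos_weights n)"

definition SO :: "nat \<Rightarrow> nat list \<Rightarrow> nat" where
  "SO n S = Min ((\<lambda>T. \<Sum>x\<leftarrow>S. tdepth T x) ` {T. bst_on n T})"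

definition WSF :: "nat \<Rightarrow> nat list \<Rightarrow> real" where
  "WSF n S = Inf ((\<lambda>(w, f). \<Sum>x\<leftarrow>S. log 2 (wint w f x / min (w f) (w x)))
                   ` (pos_weights n \<times> {1..n}))"

definition FF :: "nat \<Rightarrow> nat list \<Rightarrow> nat" where
  "FF n S = Min ((\<lambda>(T, f). \<Sum>x\<leftarrow>S. tdist T f x) ` ({T. bst_on n T} \<times> {1..n}))"

end

theory Submission
  imports Defs
begin

text \<open>
  The four bounds form the cycle FF \<le> SO \<le> WB \<le> 2 WSF + 2m \<le> 4 FF + 6m.
  For SO \<le> WB, given weights w choose as root the key at which the prefix weight first
  reaches half of the total and recurse; every key x then has depth at most log (W / w x).
  For FF \<le> SO, use the root of an optimal tree as the finger.
  For WSF \<le> 2 FF + 2m, the weights 4 ^ -d(f, x) of a tree and finger have total mass at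
  most 5/2 and give the finger weight 1.
  For WB \<le> 2 WSF + 2m, weights w and finger f yield the weights
  w(x) w(f) / w[f:x]^2, whose sum telescopes on each side of f to at most 1, so their total
  is at most 3, and 3 w[f:x]^2 / (w(x) w(f)) \<le> 4 (w[f:x] / min (w f) (w x))^2.
\<close>

section \<open>Binary search trees on [n]\<close>

lemma finite_trees_with_inorder: "finite {T :: 'a tree. inorder T = xs}"
proof (induction xs rule: length_induct)
  case (1 xs)
  let ?trees = "\<lambda>ys. {T :: 'a tree. inorder T = ys}"
  let ?R = "insert Leaf (\<Union>i<length xs.
      (\<lambda>(l, r). Node l (xs ! i) r) ` (?trees (take i xs) \<times> ?trees (drop (Suc i) xs)))"
  have "?trees xs \<subseteq> ?R"
  proof
    fix T assume "T \<in> ?trees xs"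
    then show "T \<in> ?R"
    proof (cases T)
      case (Node l a r)
      let ?i = "length (inorder l)"
      from \<open>T \<in> ?trees xs\<close> Node have xs: "xs = inorder l @ a # inorder r"
        by simp
      then have "?i < length xs" "xs ! ?i = a" "take ?i xs = inorder l" "drop (Suc ?i) xs = inorder r"
        by (simp_all add: nth_append)
      then have "(l, r) \<in> ?trees (take ?i xs) \<times> ?trees (drop (Suc ?i) xs)"
        and "T = (\<lambda>(l, r). Node l (xs ! ?i) r) (l, r)"
        using Node by simp_all
      with \<open>?i < length xs\<close> show ?thesis
        by blast
    qed simp
  qed
  moreover have "finite ?R"
    using 1 by (auto intro!: finite_imageI finite_cartesian_product)
  ultimately show ?case
    by (rule finite_subset)
qed

lemma finite_bst_on: "finite {T. bst_on n T}"
  unfolding bst_on_def by (rule finite_trees_with_inorder)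

lemma bst_on_imp_bst: "bst_on n T \<Longrightarrow> bst T"
  unfolding bst_on_def bst_iff_sorted_wrt_less by (metis sorted_wrt_upt)

lemma set_tree_bst_on: "bst_on n T \<Longrightarrow> set_tree T = {1..n}"
  unfolding bst_on_def by (metis atLeastLessThanSuc_atLeastAtMost Suc_eq_plus1 set_inorder set_upt)

section \<open>Weight-balanced trees\<close>

(* The disjunct j = k - 1 keeps the root among lo, ..., lo + k - 1 for arbitrary real weights,
   which termination needs. *)
definition split_index :: "(nat \<Rightarrow> real) \<Rightarrow> nat \<Rightarrow> nat \<Rightarrow> nat" where
  "split_index w lo k =
     (LEAST j. j = k - 1 \<or> (\<Sum>i=lo..<lo+k. w i) \<le> 2 * (\<Sum>i=lo..<lo+Suc j. w i))"

lemma split_index_less: "k \<noteq> 0 \<Longrightarrow> split_index w lo k < k"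
  unfolding split_index_def by (rule le_less_trans[OF Least_le[of _ "k - 1"]]) auto

lemma split_index_spec:
  "split_index w lo k = k - 1 \<or>
     (\<Sum>i=lo..<lo+k. w i) \<le> 2 * (\<Sum>i=lo..<lo + Suc (split_index w lo k). w i)"
  unfolding split_index_def by (rule LeastI[of _ "k - 1"]) simp

lemma split_index_minimal:
  assumes "j < split_index w lo k"
  shows "2 * (\<Sum>i=lo..<lo + Suc j. w i) < (\<Sum>i=lo..<lo+k. w i)"
  using not_less_Least[OF assms[unfolded split_index_def]] by simp

lemma split_index_balanced:
  assumes w: "\<forall>i\<in>{lo..<lo+k}. 0 \<le> w i" and "k \<noteq> 0"
  defines "j \<equiv> split_index w lo k"
  shows "2 * (\<Sum>i=lo..<lo+j. w i) \<le> (\<Sum>i=lo..<lo+k. w i)"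
    and "2 * (\<Sum>i=lo+j+1..<lo+k. w i) \<le> (\<Sum>i=lo..<lo+k. w i)"
proof -
  let ?tot = "\<Sum>i=lo..<lo+k. w i"
  have "j < k"
    unfolding j_def using \<open>k \<noteq> 0\<close> by (rule split_index_less)
  have "0 \<le> ?tot"
    using w by (intro sum_nonneg) auto
  have "?tot = (\<Sum>i=lo..<lo+j. w i) + (\<Sum>i=lo+j..<lo+k. w i)"
    using \<open>j < k\<close> by (intro sum.atLeastLessThan_concat[symmetric]) auto
  also have "(\<Sum>i=lo+j..<lo+k. w i) = w (lo+j) + (\<Sum>i=lo+j+1..<lo+k. w i)"
    using \<open>j < k\<close> by (subst sum.atLeast_Suc_lessThan) auto
  finally have split: "?tot = (\<Sum>i=lo..<lo+j. w i) + w (lo+j) + (\<Sum>i=lo+j+1..<lo+k. w i)"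
    by simp
  show "2 * (\<Sum>i=lo..<lo+j. w i) \<le> ?tot"
  proof (cases "j = 0")
    case False
    then have "j - 1 < split_index w lo k"
      unfolding j_def by simp
    from split_index_minimal[OF this] False show ?thesis
      by simp
  qed (use \<open>0 \<le> ?tot\<close> in simp)
  show "2 * (\<Sum>i=lo+j+1..<lo+k. w i) \<le> ?tot"
  proof (cases "j = k - 1")
    case False
    with split_index_spec[of w lo k] split show ?thesis
      by (simp add: j_def)
  qed (use \<open>0 \<le> ?tot\<close> \<open>k \<noteq> 0\<close> in simp)
qed

function weight_balanced_tree :: "(nat \<Rightarrow> real) \<Rightarrow> nat \<Rightarrow> nat \<Rightarrow> nat tree" where
  "weight_balanced_tree w lo k =
     (if k = 0 then Leaf
      else let j = split_index w lo k
           in Node (weight_balanced_tree w lo j) (lo+j) (weight_balanced_tree w (lo+j+1) (k-j-1)))"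
  by pat_completeness auto
termination
proof (relation "measure (\<lambda>(w, lo, k). k)")
  fix w :: "nat \<Rightarrow> real" and lo k j :: nat
  assume "k \<noteq> 0" and "j = split_index w lo k"
  then have "j < k"
    using split_index_less by simp
  then show "((w, lo, j), w, lo, k) \<in> measure (\<lambda>(w, lo, k). k)"
    and "((w, lo + j + 1, k - j - 1), w, lo, k) \<in> measure (\<lambda>(w, lo, k). k)"
    by auto
qed auto

declare weight_balanced_tree.simps[simp del]

lemma weight_balanced_tree_Node:
  "k \<noteq> 0 \<Longrightarrow> weight_balanced_tree w lo k =
     Node (weight_balanced_tree w lo (split_index w lo k)) (lo + split_index w lo k)
          (weight_balanced_tree w (lo + split_index w lo k + 1) (k - split_index w lo k - 1))"
  by (subst weight_balanced_tree.simps) (simp add: Let_def)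

lemma inorder_weight_balanced_tree: "inorder (weight_balanced_tree w lo k) = [lo..<lo+k]"
proof (induction w lo k rule: weight_balanced_tree.induct)
  case (1 w lo k)
  show ?case
  proof (cases "k = 0")
    case False
    define j where "j = split_index w lo k"
    have "j < k"
      using split_index_less[OF False] j_def by simp
    then have "[lo..<lo+k] = [lo..<lo+j] @ [lo+j..<lo+j+(k-j)]"
      using upt_add_eq_append[of lo "lo+j" "k-j"] by simp
    also have "[lo+j..<lo+j+(k-j)] = (lo+j) # [lo+j+1..<lo+j+1+(k-j-1)]"
      using \<open>j < k\<close> by (simp add: upt_conv_Cons)
    finally show ?thesis
      using 1 False
      by (simp add: weight_balanced_tree_Node j_def)
  qed (simp add: weight_balanced_tree.simps)
qed

lemma bst_on_weight_balanced_tree: "bst_on n (weight_balanced_tree w 1 n)"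
  unfolding bst_on_def inorder_weight_balanced_tree by simp

lemma weight_balanced_tree_depth:
  assumes "\<forall>i\<in>{lo..<lo+k}. 0 \<le> w i" and "x \<in> {lo..<lo+k}"
  shows "2 ^ tdepth (weight_balanced_tree w lo k) x * w x \<le> (\<Sum>i=lo..<lo+k. w i)"
  using assms
proof (induction w lo k rule: weight_balanced_tree.induct)
  case (1 w lo k)
  then have "k \<noteq> 0" by auto
  define j where "j = split_index w lo k"
  have "j < k"
    using split_index_less[OF \<open>k \<noteq> 0\<close>] j_def by simp
  have T: "weight_balanced_tree w lo k =
      Node (weight_balanced_tree w lo j) (lo+j) (weight_balanced_tree w (lo+j+1) (k-j-1))"
    using \<open>k \<noteq> 0\<close> by (simp add: weight_balanced_tree_Node j_def)
  have halves: "2 * (\<Sum>i=lo..<lo+j. w i) \<le> (\<Sum>i=lo..<lo+k. w i)"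
      "2 * (\<Sum>i=lo+j+1..<lo+k. w i) \<le> (\<Sum>i=lo..<lo+k. w i)"
    using split_index_balanced[OF "1.prems"(1) \<open>k \<noteq> 0\<close>] by (simp_all add: j_def)
  consider "x < lo + j" | "x = lo + j" | "lo + j < x" by linarith
  then show ?case
  proof cases
    case 1
    have "2 ^ tdepth (weight_balanced_tree w lo j) x * w x \<le> (\<Sum>i=lo..<lo+j. w i)"
      using "1.prems" 1 \<open>j < k\<close> by (intro "1.IH"(1)[OF \<open>k \<noteq> 0\<close> j_def]) auto
    with T 1 halves(1) show ?thesis
      by simp
  next
    case 2
    have "w x \<le> (\<Sum>i=lo..<lo+k. w i)"
      using "1.prems" by (intro member_le_sum) auto
    with T 2 show ?thesis
      by simp
  next
    case 3
    have hi: "lo + j + 1 + (k - j - 1) = lo + k"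
      using \<open>j < k\<close> by simp
    have "2 ^ tdepth (weight_balanced_tree w (lo+j+1) (k-j-1)) x * w x \<le> (\<Sum>i=lo+j+1..<lo+k. w i)"
      using "1.prems" 3 "1.IH"(2)[OF \<open>k \<noteq> 0\<close> j_def] unfolding hi by auto
    with T 3 halves(2) show ?thesis
      by simp
  qed
qed

section \<open>Geometric sums over depths and distances\<close>

lemma sum_pow_tdepth_Node:
  assumes "bst (Node l a r)"
  shows "(\<Sum>y\<leftarrow>inorder (Node l a r). (q::real) ^ tdepth (Node l a r) y) =
           q * (\<Sum>y\<leftarrow>inorder l. q ^ tdepth l y) + 1 + q * (\<Sum>y\<leftarrow>inorder r. q ^ tdepth r y)"
proof -
  have "(\<Sum>y\<leftarrow>inorder l. q ^ tdepth (Node l a r) y) = (\<Sum>y\<leftarrow>inorder l. q * q ^ tdepth l y)"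
  proof (rule arg_cong[where f = sum_list], rule map_cong)
    fix y assume "y \<in> set (inorder l)"
    with assms have "y < a" by simp
    then show "q ^ tdepth (Node l a r) y = q * q ^ tdepth l y" by simp
  qed simp
  moreover have "(\<Sum>y\<leftarrow>inorder r. q ^ tdepth (Node l a r) y) = (\<Sum>y\<leftarrow>inorder r. q * q ^ tdepth r y)"
  proof (rule arg_cong[where f = sum_list], rule map_cong)
    fix y assume "y \<in> set (inorder r)"
    with assms have "a < y" by simp
    then show "q ^ tdepth (Node l a r) y = q * q ^ tdepth r y" by simp
  qed simp
  ultimately show ?thesis
    by (simp add: sum_list_const_mult)
qed

lemma sum_pow_tdepth_le:
  fixes q :: real
  assumes "bst T" and "0 \<le> q" and "q < 1/2"
  shows "(\<Sum>y\<leftarrow>inorder T. q ^ tdepth T y) \<le> 1 / (1 - 2 * q)"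
  using assms(1)
proof (induction T)
  case (Node l a r)
  have IH: "(\<Sum>y\<leftarrow>inorder l. q ^ tdepth l y) \<le> 1 / (1 - 2 * q)"
    "(\<Sum>y\<leftarrow>inorder r. q ^ tdepth r y) \<le> 1 / (1 - 2 * q)"
    using Node by simp_all
  have "(\<Sum>y\<leftarrow>inorder (Node l a r). q ^ tdepth (Node l a r) y)
      \<le> q * (1 / (1 - 2 * q)) + 1 + q * (1 / (1 - 2 * q))"
    unfolding sum_pow_tdepth_Node[OF Node.prems]
    by (intro add_mono mult_left_mono IH order_refl \<open>0 \<le> q\<close>)
  also have "\<dots> = 1 / (1 - 2 * q)"
    using \<open>q < 1/2\<close> by (simp add: field_simps)
  finally show ?case .
qed (use assms in simp)

lemma tdist_self: "tdist T a a = 0"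
  by (induction T) auto

lemma sum_pow_tdist_far:
  assumes "\<forall>y\<in>set_tree t. tdist T f y = tdepth T f + Suc (tdepth t y)"
  shows "(\<Sum>y\<leftarrow>inorder t. (q::real) ^ tdist T f y) =
           q ^ tdepth T f * (q * (\<Sum>y\<leftarrow>inorder t. q ^ tdepth t y))"
proof -
  have "(\<Sum>y\<leftarrow>inorder t. q ^ tdist T f y) = (\<Sum>y\<leftarrow>inorder t. q ^ tdepth T f * (q * q ^ tdepth t y))"
  proof (rule arg_cong[where f = sum_list], rule map_cong)
    fix y assume "y \<in> set (inorder t)"
    with assms show "q ^ tdist T f y = q ^ tdepth T f * (q * q ^ tdepth t y)"
      by (simp add: power_add)
  qed simp
  then show ?thesis
    by (simp only: sum_list_const_mult)
qed

lemma sum_pow_tdist_Node_less: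
  assumes "bst (Node l a r)" and "f < a"
  shows "(\<Sum>y\<leftarrow>inorder (Node l a r). (q::real) ^ tdist (Node l a r) f y) =
           (\<Sum>y\<leftarrow>inorder l. q ^ tdist l f y)
           + q ^ Suc (tdepth l f) * (1 + q * (\<Sum>y\<leftarrow>inorder r. q ^ tdepth r y))"
proof -
  have "(\<Sum>y\<leftarrow>inorder l. q ^ tdist (Node l a r) f y) = (\<Sum>y\<leftarrow>inorder l. q ^ tdist l f y)"
  proof (rule arg_cong[where f = sum_list], rule map_cong)
    fix y assume "y \<in> set (inorder l)"
    with assms show "q ^ tdist (Node l a r) f y = q ^ tdist l f y" by simp
  qed simp
  moreover have "\<forall>y\<in>set_tree r. tdist (Node l a r) f y = tdepth (Node l a r) f + Suc (tdepth r y)"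
    using assms by fastforce
  ultimately show ?thesis
    using assms(2) sum_pow_tdist_far[of r "Node l a r" f q] by (simp add: algebra_simps)
qed

lemma sum_pow_tdist_Node_greater:
  assumes "bst (Node l a r)" and "a < f"
  shows "(\<Sum>y\<leftarrow>inorder (Node l a r). (q::real) ^ tdist (Node l a r) f y) =
           (\<Sum>y\<leftarrow>inorder r. q ^ tdist r f y)
           + q ^ Suc (tdepth r f) * (1 + q * (\<Sum>y\<leftarrow>inorder l. q ^ tdepth l y))"
proof -
  have "(\<Sum>y\<leftarrow>inorder r. q ^ tdist (Node l a r) f y) = (\<Sum>y\<leftarrow>inorder r. q ^ tdist r f y)"
  proof (rule arg_cong[where f = sum_list], rule map_cong)
    fix y assume "y \<in> set (inorder r)"
    with assms show "q ^ tdist (Node l a r) f y = q ^ tdist r f y" by simp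
  qed simp
  moreover have "\<forall>y\<in>set_tree l. tdist (Node l a r) f y = tdepth (Node l a r) f + Suc (tdepth l y)"
    using assms by fastforce
  ultimately show ?thesis
    using assms(2) sum_pow_tdist_far[of l "Node l a r" f q] by (simp add: algebra_simps)
qed

(* Without the subtracted term the induction fails: it pays for the far subtree and the root
   when the finger lies one level deeper. *)
lemma sum_pow_tdist_le:
  assumes "bst T" and "f \<in> set_tree T"
  shows "(\<Sum>y\<leftarrow>inorder T. (1/4::real) ^ tdist T f y) \<le> 5/2 - 1/2 * (1/4) ^ tdepth T f"
  using assms
proof (induction T)
  case (Node l a r)
  let ?q = "1/4::real"
  have "bst l" "bst r"
    using Node.prems(1) by auto
  have K_le: "(\<Sum>y\<leftarrow>inorder t. ?q ^ tdepth t y) \<le> 2" if "bst t" for t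
    using sum_pow_tdepth_le[OF that, of ?q] by simp
  have step: "s + ?q ^ Suc d * (1 + ?q * K) \<le> 5/2 - 1/2 * ?q ^ Suc d"
    if "s \<le> 5/2 - 1/2 * ?q ^ d" and "K \<le> 2" for s K :: real and d :: nat
  proof -
    have "?q ^ d * K \<le> ?q ^ d * 2"
      using \<open>K \<le> 2\<close> by (intro mult_left_mono) simp_all
    moreover have "?q ^ Suc d * (1 + ?q * K) = ?q ^ d / 4 + ?q ^ d * K / 16"
      and "?q ^ Suc d = ?q ^ d / 4"
      by (simp_all add: field_simps)
    ultimately show ?thesis
      using that(1) by linarith
  qed
  consider "f = a" | "f < a" | "a < f" by linarith
  then show ?case
  proof cases
    case 1
    with sum_pow_tdepth_le[OF Node.prems(1), of ?q] show ?thesis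
      by simp
  next
    case 2
    with Node.prems have "f \<in> set_tree l" by auto
    with Node.IH(1) \<open>bst l\<close> have "(\<Sum>y\<leftarrow>inorder l. ?q ^ tdist l f y) \<le> 5/2 - 1/2 * ?q ^ tdepth l f"
      by simp
    from step[OF this K_le[OF \<open>bst r\<close>]] 2 show ?thesis
      unfolding sum_pow_tdist_Node_less[OF Node.prems(1) 2] by simp
  next
    case 3
    with Node.prems have "f \<in> set_tree r" by auto
    with Node.IH(2) \<open>bst r\<close> have "(\<Sum>y\<leftarrow>inorder r. ?q ^ tdist r f y) \<le> 5/2 - 1/2 * ?q ^ tdepth r f"
      by simp
    from step[OF this K_le[OF \<open>bst l\<close>]] 3 show ?thesis
      unfolding sum_pow_tdist_Node_greater[OF Node.prems(1) 3] by simp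
  qed
qed simp

section \<open>Finger weights\<close>

lemma sum_ratio_prefix_sq_le:
  fixes a :: "nat \<Rightarrow> real"
  assumes "\<forall>i\<le>K. 0 < a i"
  shows "(\<Sum>k=1..K. a k * a 0 / (\<Sum>i=0..k. a i)^2) \<le> 1 - a 0 / (\<Sum>i=0..K. a i)"
  using assms
proof (induction K)
  case (Suc K)
  define P where "P = (\<Sum>i=0..K. a i)"
  have "0 < a 0" "0 < a (Suc K)" "0 < P"
    using Suc.prems unfolding P_def by (auto intro: sum_pos)
  have "a (Suc K) * a 0 / (P + a (Suc K))^2 \<le> a (Suc K) * a 0 / (P * (P + a (Suc K)))"
    using \<open>0 < a 0\<close> \<open>0 < a (Suc K)\<close> \<open>0 < P\<close>
    by (intro divide_left_mono) (auto simp: power2_eq_square intro!: mult_right_mono)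
  also have "\<dots> = a 0 / P - a 0 / (P + a (Suc K))"
    using \<open>0 < a (Suc K)\<close> \<open>0 < P\<close> by (simp add: field_simps)
  finally have "a (Suc K) * a 0 / (P + a (Suc K))^2 \<le> a 0 / P - a 0 / (P + a (Suc K))" .
  moreover have "(\<Sum>k=1..K. a k * a 0 / (\<Sum>i=0..k. a i)^2) \<le> 1 - a 0 / P"
    using Suc unfolding P_def by simp
  ultimately show ?case
    by (simp add: P_def[symmetric])
qed simp

lemma sum_ratio_prefix_sq_le_one:
  fixes a :: "nat \<Rightarrow> real"
  assumes "\<forall>i\<le>K. 0 < a i"
  shows "(\<Sum>k=1..K. a k * a 0 / (\<Sum>i=0..k. a i)^2) \<le> 1"
proof -
  have "0 \<le> a 0 / (\<Sum>i=0..K. a i)"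
    using assms by (intro divide_nonneg_nonneg sum_nonneg) (auto intro: less_imp_le)
  with sum_ratio_prefix_sq_le[OF assms] show ?thesis
    by linarith
qed

definition finger_weight :: "(nat \<Rightarrow> real) \<Rightarrow> nat \<Rightarrow> nat \<Rightarrow> real" where
  "finger_weight w f x = w x * w f / (wint w f x)^2"

lemma sum_finger_weight_right_le:
  assumes "f \<le> n" and "\<forall>i\<in>{f..n}. 0 < w i"
  shows "(\<Sum>x\<in>{f<..n}. finger_weight w f x) \<le> 1"
proof -
  define a where "a i = w (f + i)" for i
  have "(\<Sum>k=1..n-f. a k * a 0 / (\<Sum>i=0..k. a i)^2) = (\<Sum>x\<in>{f<..n}. finger_weight w f x)"
  proof (rule sum.reindex_bij_witness[where j = "\<lambda>k. f + k" and i = "\<lambda>x. x - f"])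
    fix k assume "k \<in> {1..n-f}"
    have "wint w f (f + k) = (\<Sum>i=0..k. a i)"
      unfolding wint_def a_def using sum.shift_bounds_cl_nat_ivl[of w 0 f k] by (simp add: add.commute)
    then show "finger_weight w f (f + k) = a k * a 0 / (\<Sum>i=0..k. a i)^2"
      unfolding finger_weight_def a_def by simp
  qed auto
  moreover have "(\<Sum>k=1..n-f. a k * a 0 / (\<Sum>i=0..k. a i)^2) \<le> 1"
  proof (intro sum_ratio_prefix_sq_le_one allI impI)
    fix i assume "i \<le> n - f"
    with assms show "0 < a i"
      by (simp add: a_def)
  qed
  ultimately show ?thesis
    by simp
qed

lemma sum_finger_weight_left_le:
  assumes "g \<le> f" and "\<forall>i\<in>{g..f}. 0 < w i"
  shows "(\<Sum>x\<in>{g..<f}. finger_weight w f x) \<le> 1"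
proof -
  define a where "a i = w (f - i)" for i
  have "(\<Sum>k=1..f-g. a k * a 0 / (\<Sum>i=0..k. a i)^2) = (\<Sum>x\<in>{g..<f}. finger_weight w f x)"
  proof (rule sum.reindex_bij_witness[where i = "\<lambda>k. f - k" and j = "\<lambda>x. f - x"])
    fix k assume k: "k \<in> {1..f-g}"
    have "wint w f (f - k) = (\<Sum>i=0..k. a i)"
      unfolding wint_def a_def
      by (rule sum.reindex_bij_witness[where i = "\<lambda>i. f - i" and j = "\<lambda>i. f - i"]) (use k in auto)
    then show "finger_weight w f (f - k) = a k * a 0 / (\<Sum>i=0..k. a i)^2"
      unfolding finger_weight_def a_def by simp
  qed auto
  moreover have "(\<Sum>k=1..f-g. a k * a 0 / (\<Sum>i=0..k. a i)^2) \<le> 1"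
  proof (intro sum_ratio_prefix_sq_le_one allI impI)
    fix i assume "i \<le> f - g"
    with assms show "0 < a i"
      by (simp add: a_def)
  qed
  ultimately show ?thesis
    by simp
qed

lemma sum_finger_weight_le:
  assumes "f \<in> {1..n}" and "\<forall>i\<in>{1..n}. 0 < w i"
  shows "(\<Sum>x=1..n. finger_weight w f x) \<le> 3"
proof -
  have "{1..n} = {1..<f} \<union> ({f} \<union> {f<..n})"
    using assms(1) by auto
  then have "(\<Sum>x=1..n. finger_weight w f x) =
      (\<Sum>x\<in>{1..<f}. finger_weight w f x) + (finger_weight w f f + (\<Sum>x\<in>{f<..n}. finger_weight w f x))"
    by (simp only:) (subst sum.union_disjoint, auto)+
  moreover have "finger_weight w f f = 1"
    using assms by (simp add: finger_weight_def wint_def power2_eq_square less_imp_neq[symmetric])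
  moreover have "(\<Sum>x\<in>{1..<f}. finger_weight w f x) \<le> 1" "(\<Sum>x\<in>{f<..n}. finger_weight w f x) \<le> 1"
    using assms by (auto intro!: sum_finger_weight_left_le sum_finger_weight_right_le)
  ultimately show ?thesis
    by linarith
qed

lemma log2_div_nonneg: "0 < b \<Longrightarrow> b \<le> a \<Longrightarrow> 0 \<le> log 2 (a / b)"
  by simp

lemma log2_le_of_le_power: "0 < t \<Longrightarrow> t \<le> 2 ^ k \<Longrightarrow> log 2 t \<le> real k"
  by (simp add: log_le_iff powr_realpow)

lemma log2_le_of_le_four_sq:
  fixes t q :: real
  assumes "0 < t" and "0 < q" and "t \<le> 4 * q^2"
  shows "log 2 t \<le> 2 + 2 * log 2 q"
proof -
  have "log 2 t \<le> log 2 (4 * q^2)"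
    using assms by simp
  also have "\<dots> = log 2 (2^2) + log 2 (q^2)"
    using \<open>0 < q\<close> by (simp add: log_mult_pos)
  also have "\<dots> = 2 + 2 * log 2 q"
    using \<open>0 < q\<close> by (simp only: log_nat_power) simp
  finally show ?thesis .
qed

lemma pos_weights_const_one: "(\<lambda>_. 1) \<in> pos_weights n"
  by (simp add: pos_weights_def)

lemma pos_weights_nonneg: "w \<in> pos_weights n \<Longrightarrow> i \<in> {1..n} \<Longrightarrow> 0 \<le> w i"
  unfolding pos_weights_def by (simp add: less_imp_le)

lemma wint_interval_subset: "(f::nat) \<in> {1..n} \<Longrightarrow> x \<in> {1..n} \<Longrightarrow> {min f x..max f x} \<subseteq> {1..n}"
  unfolding min_def max_def by auto

lemma weight_le_totW: "w \<in> pos_weights n \<Longrightarrow> x \<in> {1..n} \<Longrightarrow> w x \<le> totW n w"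
  unfolding totW_def by (rule member_le_sum) (auto intro: pos_weights_nonneg)

lemma weight_le_wint:
  assumes "w \<in> pos_weights n" and "f \<in> {1..n}" and "x \<in> {1..n}"
  shows "w x \<le> wint w f x"
proof -
  have "0 \<le> w i" if "i \<in> {min f x..max f x}" for i
    using that wint_interval_subset[OF assms(2,3)] pos_weights_nonneg[OF assms(1)] by blast
  then show ?thesis
    unfolding wint_def by (intro member_le_sum) auto
qed

lemma wint_le_totW:
  assumes "w \<in> pos_weights n" and "f \<in> {1..n}" and "x \<in> {1..n}"
  shows "wint w f x \<le> totW n w"
  unfolding wint_def totW_def
  using wint_interval_subset[OF assms(2,3)] pos_weights_nonneg[OF assms(1)] by (intro sum_mono2) auto

lemma totW_eq_sum_inorder: "bst_on n T \<Longrightarrow> totW n w = (\<Sum>y\<leftarrow>inorder T. w y)"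
proof -
  assume "bst_on n T"
  have "{1..n} = set [1..<n+1]"
    by auto
  with \<open>bst_on n T\<close> show ?thesis
    unfolding totW_def bst_on_def by (simp only: sum_set_upt_conv_sum_list_nat)
qed

lemma log2_wint_ratio_nonneg:
  assumes "w \<in> pos_weights n" and "f \<in> {1..n}" and "x \<in> {1..n}"
  shows "0 \<le> log 2 (wint w f x / min (w f) (w x))"
proof (rule log2_div_nonneg)
  show "0 < min (w f) (w x)"
    using assms by (simp add: pos_weights_def)
  show "min (w f) (w x) \<le> wint w f x"
    using weight_le_wint[OF assms] by simp
qed

lemma log2_wint_ratio_le_of_quarter_power:
  assumes "w \<in> pos_weights n" and "f \<in> {1..n}" and "x \<in> {1..n}"
    and "w f = 1" and "w x = (1/4) ^ d" and "totW n w \<le> 4"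
  shows "log 2 (wint w f x / min (w f) (w x)) \<le> 2 + 2 * real d"
proof -
  have "0 < w x" and "min (w f) (w x) = w x"
    using assms(4,5) by (simp_all add: power_le_one)
  have "0 < wint w f x"
    using weight_le_wint[OF assms(1-3)] \<open>0 < w x\<close> by linarith
  have "wint w f x / w x \<le> 4 / w x"
    using wint_le_totW[OF assms(1-3)] assms(6) \<open>0 < w x\<close> by (intro divide_right_mono) auto
  also have "\<dots> = 2 ^ (2 + 2 * d)"
    using assms(5) by (simp add: power_add power_mult power_one_over)
  finally have "log 2 (wint w f x / w x) \<le> real (2 + 2 * d)"
    using \<open>0 < wint w f x\<close> \<open>0 < w x\<close> by (intro log2_le_of_le_power) auto
  with \<open>min (w f) (w x) = w x\<close> show ?thesis
    by simp
qed

lemma finger_weight_pos: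
  assumes "w \<in> pos_weights n" and "f \<in> {1..n}" and "x \<in> {1..n}"
  shows "0 < finger_weight w f x"
proof -
  have "0 < w x" "0 < w f"
    using assms by (auto simp: pos_weights_def)
  moreover have "0 < wint w f x"
    using weight_le_wint[OF assms] \<open>0 < w x\<close> by linarith
  ultimately show ?thesis
    by (simp add: finger_weight_def)
qed

lemma div_finger_weight_le:
  assumes "w \<in> pos_weights n" and "f \<in> {1..n}" and "x \<in> {1..n}" and "W \<le> 3"
  shows "W / finger_weight w f x \<le> 4 * (wint w f x / min (w f) (w x))^2"
proof -
  let ?I = "wint w f x" and ?m = "min (w f) (w x)"
  have "0 < w x" "0 < w f"
    using assms by (auto simp: pos_weights_def)
  then have "0 < ?m" by simp
  have "0 < ?I"
    using weight_le_wint[OF assms(1-3)] \<open>0 < w x\<close> by linarith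
  have "?m * ?m \<le> w x * w f"
    by (rule mult_mono) (use \<open>0 < w x\<close> \<open>0 < w f\<close> in auto)
  have "W / finger_weight w f x = W * ?I^2 / (w x * w f)"
    using \<open>0 < w x\<close> \<open>0 < w f\<close> \<open>0 < ?I\<close> by (simp add: finger_weight_def)
  also have "\<dots> \<le> 3 * ?I^2 / (w x * w f)"
    using \<open>W \<le> 3\<close> \<open>0 < w x\<close> \<open>0 < w f\<close> by (intro divide_right_mono mult_right_mono) auto
  also have "\<dots> \<le> 3 * ?I^2 / (?m * ?m)"
    using \<open>?m * ?m \<le> w x * w f\<close> \<open>0 < ?m\<close> by (intro divide_left_mono) auto
  also have "\<dots> \<le> 4 * ?I^2 / (?m * ?m)"
    using \<open>0 < ?m\<close> by (intro divide_right_mono) auto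
  also have "\<dots> = 4 * (?I / ?m)^2"
    by (simp add: power2_eq_square)
  finally show ?thesis .
qed

section \<open>The four bounds\<close>

lemma WB_le:
  assumes "set S \<subseteq> {1..n}" and "w \<in> pos_weights n"
  shows "WB n S \<le> (\<Sum>x\<leftarrow>S. log 2 (totW n w / w x))"
  unfolding WB_def
proof (rule cINF_lower[OF bdd_belowI2 assms(2)])
  fix v assume v: "v \<in> pos_weights n"
  show "0 \<le> (\<Sum>x\<leftarrow>S. log 2 (totW n v / v x))"
  proof (rule sum_list_nonneg)
    fix t assume "t \<in> set (map (\<lambda>x. log 2 (totW n v / v x)) S)"
    then obtain x where "x \<in> {1..n}" and t: "t = log 2 (totW n v / v x)"
      using assms(1) by auto
    with v show "0 \<le> t"
      by (simp add: log2_div_nonneg weight_le_totW pos_weights_def)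
  qed
qed

lemma le_WB:
  assumes "\<And>w. w \<in> pos_weights n \<Longrightarrow> c \<le> (\<Sum>x\<leftarrow>S. log 2 (totW n w / w x))"
  shows "c \<le> WB n S"
  unfolding WB_def using pos_weights_const_one assms by (intro cINF_greatest) auto

lemma WSF_le:
  assumes "set S \<subseteq> {1..n}" and "w \<in> pos_weights n" and "f \<in> {1..n}"
  shows "WSF n S \<le> (\<Sum>x\<leftarrow>S. log 2 (wint w f x / min (w f) (w x)))"
proof -
  have "WSF n S \<le> (\<lambda>(w, f). \<Sum>x\<leftarrow>S. log 2 (wint w f x / min (w f) (w x))) (w, f)"
    unfolding WSF_def
  proof (rule cINF_lower[OF bdd_belowI2])
    fix p assume "p \<in> pos_weights n \<times> {1..n}"
    then obtain v g where p: "p = (v, g)" and v: "v \<in> pos_weights n" and g: "g \<in> {1..n}"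
      by auto
    have "0 \<le> log 2 (wint v g x / min (v g) (v x))" if "x \<in> set S" for x
      using that assms(1) by (intro log2_wint_ratio_nonneg[OF v g]) auto
    then have "0 \<le> (\<Sum>x\<leftarrow>S. log 2 (wint v g x / min (v g) (v x)))"
      by (intro sum_list_nonneg) auto
    then show "0 \<le> (\<lambda>(w, f). \<Sum>x\<leftarrow>S. log 2 (wint w f x / min (w f) (w x))) p"
      unfolding p by simp
  qed (use assms in auto)
  then show ?thesis
    by simp
qed

lemma le_WSF:
  assumes "1 \<le> n"
    and "\<And>w f. w \<in> pos_weights n \<Longrightarrow> f \<in> {1..n} \<Longrightarrow> c \<le> (\<Sum>x\<leftarrow>S. log 2 (wint w f x / min (w f) (w x)))"
  shows "c \<le> WSF n S"
  unfolding WSF_def using pos_weights_const_one assms by (intro cINF_greatest) auto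

lemma WSF_nonneg:
  assumes "set S \<subseteq> {1..n}" and "1 \<le> n"
  shows "0 \<le> WSF n S"
proof (rule le_WSF[OF assms(2)])
  fix w f assume w: "w \<in> pos_weights n" and f: "f \<in> {1..n}"
  show "0 \<le> (\<Sum>x\<leftarrow>S. log 2 (wint w f x / min (w f) (w x)))"
  proof (rule sum_list_nonneg)
    fix t assume "t \<in> set (map (\<lambda>x. log 2 (wint w f x / min (w f) (w x))) S)"
    then obtain x where x: "x \<in> {1..n}" and t: "t = log 2 (wint w f x / min (w f) (w x))"
      using assms(1) by auto
    show "0 \<le> t"
      unfolding t using w f x by (rule log2_wint_ratio_nonneg)
  qed
qed

lemma SO_le: "bst_on n T \<Longrightarrow> SO n S \<le> (\<Sum>x\<leftarrow>S. tdepth T x)"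
  unfolding SO_def using finite_bst_on by (intro Min_le) auto

lemma SO_attained: "\<exists>T. bst_on n T \<and> SO n S = (\<Sum>x\<leftarrow>S. tdepth T x)"
proof -
  have "SO n S \<in> (\<lambda>T. \<Sum>x\<leftarrow>S. tdepth T x) ` {T. bst_on n T}"
    unfolding SO_def using finite_bst_on bst_on_weight_balanced_tree by (intro Min_in) auto
  then show ?thesis
    by auto
qed

lemma FF_le: "bst_on n T \<Longrightarrow> f \<in> {1..n} \<Longrightarrow> FF n S \<le> (\<Sum>x\<leftarrow>S. tdist T f x)"
  unfolding FF_def using finite_bst_on by (intro Min_le) auto

lemma FF_attained:
  assumes "1 \<le> n"
  shows "\<exists>T f. bst_on n T \<and> f \<in> {1..n} \<and> FF n S = (\<Sum>x\<leftarrow>S. tdist T f x)"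
proof -
  have "FF n S \<in> (\<lambda>(T, f). \<Sum>x\<leftarrow>S. tdist T f x) ` ({T. bst_on n T} \<times> {1..n})"
    unfolding FF_def using finite_bst_on bst_on_weight_balanced_tree assms by (intro Min_in) auto
  then show ?thesis
    by force
qed

lemma SO_le_WB:
  assumes "set S \<subseteq> {1..n}"
  shows "real (SO n S) \<le> WB n S"
proof (rule le_WB)
  fix w assume w: "w \<in> pos_weights n"
  let ?T = "weight_balanced_tree w 1 n"
  have "real (SO n S) \<le> real (\<Sum>x\<leftarrow>S. tdepth ?T x)"
    using SO_le[OF bst_on_weight_balanced_tree] by (simp only: of_nat_le_iff)
  also have "\<dots> = (\<Sum>x\<leftarrow>S. real (tdepth ?T x))"
    by (simp flip: sum_list_of_nat add: comp_def)
  also have "\<dots> \<le> (\<Sum>x\<leftarrow>S. log 2 (totW n w / w x))"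
  proof (rule sum_list_mono)
    fix x assume "x \<in> set S"
    with assms have "x \<in> {1..n}" by auto
    with w have "0 < w x"
      by (simp add: pos_weights_def)
    have "2 ^ tdepth ?T x * w x \<le> (\<Sum>i=1..<1+n. w i)"
      using \<open>x \<in> {1..n}\<close> pos_weights_nonneg[OF w] by (intro weight_balanced_tree_depth) auto
    also have "\<dots> = totW n w"
      unfolding totW_def by (simp add: atLeastLessThanSuc_atLeastAtMost)
    finally have "2 ^ tdepth ?T x \<le> totW n w / w x"
      using \<open>0 < w x\<close> by (simp add: pos_le_divide_eq)
    then show "real (tdepth ?T x) \<le> log 2 (totW n w / w x)"
      by (rule le_log_of_power) simp
  qed
  finally show "real (SO n S) \<le> (\<Sum>x\<leftarrow>S. log 2 (totW n w / w x))" .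
qed

lemma FF_le_SO:
  assumes "1 \<le> n"
  shows "FF n S \<le> SO n S"
proof -
  obtain T where T: "bst_on n T" and SO: "SO n S = (\<Sum>x\<leftarrow>S. tdepth T x)"
    using SO_attained by blast
  from T assms obtain l a r where T_Node: "T = Node l a r"
    by (cases T) (auto simp: bst_on_def)
  with T have "a \<in> {1..n}"
    using set_tree_bst_on by fastforce
  with T have "FF n S \<le> (\<Sum>x\<leftarrow>S. tdist T a x)"
    by (rule FF_le)
  also have "\<dots> = SO n S"
  proof -
    have "tdist T a x = tdepth T x" for x
      unfolding T_Node by simp
    then show ?thesis
      unfolding SO by simp
  qed
  finally show ?thesis .
qed

lemma WSF_le_FF:
  assumes "set S \<subseteq> {1..n}" and "1 \<le> n"
  shows "WSF n S \<le> 2 * real (FF n S) + 2 * real (length S)"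
proof -
  obtain T f where T: "bst_on n T" and f: "f \<in> {1..n}" and FF: "FF n S = (\<Sum>x\<leftarrow>S. tdist T f x)"
    using FF_attained[OF assms(2)] by blast
  define w where "w y = (1/4::real) ^ tdist T f y" for y
  have w: "w \<in> pos_weights n"
    by (simp add: pos_weights_def w_def)
  have "w f = 1"
    by (simp add: w_def tdist_self)
  have "totW n w \<le> 5/2 - 1/2 * (1/4) ^ tdepth T f"
    using sum_pow_tdist_le[OF bst_on_imp_bst[OF T], of f] set_tree_bst_on[OF T] f
    unfolding totW_eq_sum_inorder[OF T] w_def by simp
  moreover have "0 \<le> (1/4::real) ^ tdepth T f"
    by simp
  ultimately have "totW n w \<le> 4"
    by linarith
  have "WSF n S \<le> (\<Sum>x\<leftarrow>S. log 2 (wint w f x / min (w f) (w x)))"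
    by (rule WSF_le[OF assms(1) w f])
  also have "\<dots> \<le> (\<Sum>x\<leftarrow>S. 2 + 2 * real (tdist T f x))"
  proof (rule sum_list_mono)
    fix x assume "x \<in> set S"
    with assms have x: "x \<in> {1..n}" by auto
    show "log 2 (wint w f x / min (w f) (w x)) \<le> 2 + 2 * real (tdist T f x)"
      by (rule log2_wint_ratio_le_of_quarter_power[OF w f x \<open>w f = 1\<close> _ \<open>totW n w \<le> 4\<close>])
        (simp add: w_def)
  qed
  also have "\<dots> = 2 * real (FF n S) + 2 * real (length S)"
    unfolding FF by (simp add: sum_list_addf sum_list_const_mult sum_list_triv comp_def flip: sum_list_of_nat)
  finally show ?thesis .
qed

lemma WB_le_WSF:
  assumes "set S \<subseteq> {1..n}" and "1 \<le> n"
  shows "WB n S \<le> 2 * WSF n S + 2 * real (length S)"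
proof -
  have "(WB n S - 2 * real (length S)) / 2 \<le> WSF n S"
  proof (rule le_WSF[OF assms(2)])
    fix w f assume w: "w \<in> pos_weights n" and f: "f \<in> {1..n}"
    let ?w' = "finger_weight w f"
    have w': "?w' \<in> pos_weights n"
      using finger_weight_pos[OF w f] by (simp add: pos_weights_def)
    have "totW n ?w' \<le> 3"
      using sum_finger_weight_le[OF f] w unfolding totW_def pos_weights_def by blast
    have "WB n S \<le> (\<Sum>x\<leftarrow>S. log 2 (totW n ?w' / ?w' x))"
      by (rule WB_le[OF assms(1) w'])
    also have "\<dots> \<le> (\<Sum>x\<leftarrow>S. 2 + 2 * log 2 (wint w f x / min (w f) (w x)))"
    proof (rule sum_list_mono)
      fix x assume "x \<in> set S"
      with assms have x: "x \<in> {1..n}" by auto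
      have "0 < w x" "0 < w f"
        using w f x by (auto simp: pos_weights_def)
      moreover have "0 < wint w f x"
        using weight_le_wint[OF w f x] \<open>0 < w x\<close> by linarith
      moreover have "0 < totW n ?w' / ?w' x"
        using weight_le_totW[OF w' x] finger_weight_pos[OF w f x] by simp
      ultimately show "log 2 (totW n ?w' / ?w' x) \<le> 2 + 2 * log 2 (wint w f x / min (w f) (w x))"
        using div_finger_weight_le[OF w f x \<open>totW n ?w' \<le> 3\<close>] by (intro log2_le_of_le_four_sq) auto
    qed
    also have "\<dots> = 2 * real (length S) + 2 * (\<Sum>x\<leftarrow>S. log 2 (wint w f x / min (w f) (w x)))"
      by (simp add: sum_list_addf sum_list_const_mult sum_list_triv)
    finally show "(WB n S - 2 * real (length S)) / 2 \<le> (\<Sum>x\<leftarrow>S. log 2 (wint w f x / min (w f) (w x)))"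
      by simp
  qed
  then show ?thesis
    by simp
qed

theorem mainTheorem7:
  shows "\<exists>c::real. c > 0 \<and>
    (\<forall>n m :: nat. \<forall>S :: nat list.
       n \<ge> 1 \<longrightarrow> m \<ge> 1 \<longrightarrow> length S = m \<longrightarrow> set S \<subseteq> {1..n} \<longrightarrow>
       (\<forall>X\<in>{WB n S, real (SO n S), WSF n S, real (FF n S)}.
        \<forall>Y\<in>{WB n S, real (SO n S), WSF n S, real (FF n S)}.
          X \<le> c * Y + c * real m))"
proof (intro exI[of _ 6] conjI allI impI)
  fix n m :: nat and S :: "nat list"
  assume n: "n \<ge> 1" and "m \<ge> 1" and m: "length S = m" and S: "set S \<subseteq> {1..n}"
  have "real (SO n S) \<le> WB n S"
    using SO_le_WB[OF S] .
  moreover have "WB n S \<le> 2 * WSF n S + 2 * real m"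
    using WB_le_WSF[OF S n] m by simp
  moreover have "WSF n S \<le> 2 * real (FF n S) + 2 * real m"
    using WSF_le_FF[OF S n] m by simp
  moreover have "real (FF n S) \<le> real (SO n S)"
    using FF_le_SO[OF n] by simp
  moreover have "0 \<le> WSF n S"
    using WSF_nonneg[OF S n] .
  ultimately show "\<forall>X\<in>{WB n S, real (SO n S), WSF n S, real (FF n S)}.
      \<forall>Y\<in>{WB n S, real (SO n S), WSF n S, real (FF n S)}. X \<le> 6 * Y + 6 * real m"
    by auto
qed simp

end
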